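(* Let $(A,\circ,[\cdot,\cdot])$ be a finite-dimensional dual pre-Poisson algebra. If there is a nondegenerate skew-symmetric invariant bilinear form $\mathcal{B}$ on $A$, then the representations $(A;L_\circ,R_\circ,L_{[\cdot,\cdot]},R_{[\cdot,\cdot]})$ and $(A^*;-L_\circ^*,-L_\circ^*+R_\circ^*,L_{[\cdot,\cdot]}^*,-L_{[\cdot,\cdot]}^*-R_{[\cdot,\cdot]}^* )$ of $(A,\circ,[\cdot,\cdot])$ are equivalent. Conversely, if these two representations are equivalent, then there exists a nondegenerate invariant bilinear form $\mathcal{B}$ on $A$.
   Context: Field $\mathbb{F}$ of characteristic $0$. A dual pre-Poisson algebra: $x\circ(y\circ z)=(x\circ y)\circ z=(y\circ x)\circ z$; $[x,[y,z]]=[[x,y],z]+[y,[x,z]]$; $[x,y\circ z]=[x,y]\circ z+y\circ[x,z]$; $[x\circ y,z]=x\circ[y,z]+y\circ[x,z]$; $[x,y]\circ z=-[y,x]\circ z$. $L_\diamond(x)y=x\diamond y$, $R_\diamond(x)y=y\diamond x$; for $f:A\to\mathrm{End}(A)$, $f^*:A\to\mathrm{End}(A^* )$ is $\langle f^*(x)a^*,y\rangle=-\langle a^*,f(x)y\rangle$. A bilinear form $\mathcal{B}$ on $A$ is invariant if $\mathcal{B}(x\circ y,z)=\mathcal{B}(x,y\circ z-z\circ y)$ and $\mathcal{B}([x,y],z)=\mathcal{B}(x,[y,z]+[z,y])$ for all $x,y,z$. Two representations $(V_1;l_1,r_1,l'_1,r'_1)$ and $(V_2;l_2,r_2,l'_2,r'_2)$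 (quadruples of linear maps $A\to\mathrm{End}(V_i)$ playing the roles of left/right actions of $\circ$ and of $[\cdot,\cdot]$) are equivalent if there is a linear isomorphism $\varphi:V_1\to V_2$ with $\varphi l_1(x)=l_2(x)\varphi$, $\varphi r_1(x)=r_2(x)\varphi$, $\varphi l'_1(x)=l'_2(x)\varphi$, $\varphi r'_1(x)=r'_2(x)\varphi$ for all $x\in A$. *)

theory Defs
  imports Complex_Main
begin

definition fin_dim_vs :: "('k::field \<Rightarrow> 'a::ab_group_add \<Rightarrow> 'a) \<Rightarrow> bool" where
  "fin_dim_vs s \<longleftrightarrow> (\<exists>Bas. finite_dimensional_vector_space s Bas)"

definition dual_space :: "('k::field \<Rightarrow> 'a::ab_group_add \<Rightarrow> 'a) \<Rightarrow> ('a \<Rightarrow> 'k) set" where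
  "dual_space s = {f. Vector_Spaces.linear s (*) f}"

definition bilinear_op :: "('k::field \<Rightarrow> 'a::ab_group_add \<Rightarrow> 'a) \<Rightarrow> ('a \<Rightarrow> 'a \<Rightarrow> 'a) \<Rightarrow> bool" where
  "bilinear_op s m \<longleftrightarrow> (\<forall>x. Vector_Spaces.linear s s (m x)) \<and> (\<forall>y. Vector_Spaces.linear s s (\<lambda>x. m x y))"

definition bilinear_form :: "('k::field \<Rightarrow> 'a::ab_group_add \<Rightarrow> 'a) \<Rightarrow> ('a \<Rightarrow> 'a \<Rightarrow> 'k) \<Rightarrow> bool" where
  "bilinear_form s B \<longleftrightarrow> (\<forall>x. Vector_Spaces.linear s (*) (B x)) \<and> (\<forall>y. Vector_Spaces.linear s (*) (\<lambda>x. B x y))"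

definition nondegenerate :: "('a::ab_group_add \<Rightarrow> 'a \<Rightarrow> 'k::field) \<Rightarrow> bool" where
  "nondegenerate B \<longleftrightarrow> (\<forall>x. (\<forall>y. B x y = 0) \<longrightarrow> x = 0)"

definition skew_symmetric :: "('a \<Rightarrow> 'a \<Rightarrow> 'k::field) \<Rightarrow> bool" where
  "skew_symmetric B \<longleftrightarrow> (\<forall>x y. B x y = - B y x)"

definition dual_pre_poisson :: "('a::ab_group_add \<Rightarrow> 'a \<Rightarrow> 'a) \<Rightarrow> ('a \<Rightarrow> 'a \<Rightarrow> 'a) \<Rightarrow> bool" where
  "dual_pre_poisson c b \<longleftrightarrow>
     (\<forall>x y z. c x (c y z) = c (c x y) z \<and> c (c x y) z = c (c y x) z) \<and>
     (\<forall>x y z. b x (b y z) = b (b x y) z + b y (b x z)) \<and>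
     (\<forall>x y z. b x (c y z) = c (b x y) z + c y (b x z)) \<and>
     (\<forall>x y z. b (c x y) z = c x (b y z) + c y (b x z)) \<and>
     (\<forall>x y z. c (b x y) z = - c (b y x) z)"

definition invariant_form :: "('a::ab_group_add \<Rightarrow> 'a \<Rightarrow> 'a) \<Rightarrow> ('a \<Rightarrow> 'a \<Rightarrow> 'a) \<Rightarrow> ('a \<Rightarrow> 'a \<Rightarrow> 'k) \<Rightarrow> bool" where
  "invariant_form c b B \<longleftrightarrow>
     (\<forall>x y z. B (c x y) z = B x (c y z - c z y)) \<and>
     (\<forall>x y z. B (b x y) z = B x (b y z + b z y))"

definition Lop :: "('a \<Rightarrow> 'a \<Rightarrow> 'a) \<Rightarrow> 'a \<Rightarrow> 'a \<Rightarrow> 'a" where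
  "Lop m x = (\<lambda>y. m x y)"

definition Rop :: "('a \<Rightarrow> 'a \<Rightarrow> 'a) \<Rightarrow> 'a \<Rightarrow> 'a \<Rightarrow> 'a" where
  "Rop m x = (\<lambda>y. m y x)"

definition dual_map :: "('a \<Rightarrow> 'a \<Rightarrow> 'a) \<Rightarrow> 'a \<Rightarrow> ('a \<Rightarrow> 'k::field) \<Rightarrow> ('a \<Rightarrow> 'k)" where
  "dual_map f x a = (\<lambda>y. - a (f x y))"

definition reps_equivalent ::
  "('k::field \<Rightarrow> 'a::ab_group_add \<Rightarrow> 'a) \<Rightarrow>
   ('a \<Rightarrow> 'a \<Rightarrow> 'a) \<Rightarrow> ('a \<Rightarrow> 'a \<Rightarrow> 'a) \<Rightarrow> ('a \<Rightarrow> 'a \<Rightarrow> 'a) \<Rightarrow> ('a \<Rightarrow> 'a \<Rightarrow> 'a) \<Rightarrow>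
   ('a \<Rightarrow> ('a \<Rightarrow> 'k) \<Rightarrow> ('a \<Rightarrow> 'k)) \<Rightarrow> ('a \<Rightarrow> ('a \<Rightarrow> 'k) \<Rightarrow> ('a \<Rightarrow> 'k)) \<Rightarrow>
   ('a \<Rightarrow> ('a \<Rightarrow> 'k) \<Rightarrow> ('a \<Rightarrow> 'k)) \<Rightarrow> ('a \<Rightarrow> ('a \<Rightarrow> 'k) \<Rightarrow> ('a \<Rightarrow> 'k)) \<Rightarrow> bool" where
  "reps_equivalent s l1 r1 l1' r1' l2 r2 l2' r2' \<longleftrightarrow>
    (\<exists>\<phi> :: 'a \<Rightarrow> ('a \<Rightarrow> 'k).
       (\<forall>u v. \<phi> (u + v) = (\<lambda>y. \<phi> u y + \<phi> v y)) \<and>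
       (\<forall>c u. \<phi> (s c u) = (\<lambda>y. c * \<phi> u y)) \<and>
       bij_betw \<phi> UNIV (dual_space s) \<and>
       (\<forall>x v. \<phi> (l1 x v) = l2 x (\<phi> v)) \<and>
       (\<forall>x v. \<phi> (r1 x v) = r2 x (\<phi> v)) \<and>
       (\<forall>x v. \<phi> (l1' x v) = l2' x (\<phi> v)) \<and>
       (\<forall>x v. \<phi> (r1' x v) = r2' x (\<phi> v)))"

end

theory Submission
  imports Defs
begin

text \<open>A nondegenerate bilinear form B on a finite-dimensional space identifies A with A*
  via u \<mapsto> B u. Unfolding the dual maps, this identification intertwines the right actions
  with -L* + R* and -L* - R* exactly when B is invariant. For the left actions
  the argument has to be moved across B once more, and the resulting sign is absorbed by
  skew-symmetry. Conversely, an equivalence \<phi> : A \<rightarrow> A* is itself a nondegenerate bilinear form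
  (u, y) \<mapsto> \<phi> u y, invariant because it intertwines the right actions. Neither direction uses
  the dual pre-Poisson identities or the bilinearity of the products.\<close>

lemma vector_space_field_mult: "vector_space ((*) :: 'k::field \<Rightarrow> 'k \<Rightarrow> 'k)"
  by unfold_locales (auto simp: algebra_simps)

lemma bilinear_form_linear_left:
  "bilinear_form s B \<Longrightarrow> Vector_Spaces.linear s (*) (\<lambda>x. B x y)"
  by (simp add: bilinear_form_def)

lemma bilinear_form_linear_right:
  "bilinear_form s B \<Longrightarrow> Vector_Spaces.linear s (*) (B x)"
  by (simp add: bilinear_form_def)

lemma linear_map_diff: "Vector_Spaces.linear s t f \<Longrightarrow> f (x - y) = f x - f y"
  by (simp add: module_hom.diff linear_iff_module_hom)

lemma bilinear_form_add_left: "bilinear_form s B \<Longrightarrow> B (x + y) z = B x z + B y z"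
  by (simp add: bilinear_form_def Vector_Spaces.linear_iff)

lemma bilinear_form_scale_left: "bilinear_form s B \<Longrightarrow> B (s a x) z = a * B x z"
  by (simp add: bilinear_form_def Vector_Spaces.linear_iff)

lemma bilinear_form_diff_left: "bilinear_form s B \<Longrightarrow> B (x - y) z = B x z - B y z"
  by (rule linear_map_diff[OF bilinear_form_linear_left])

lemma bilinear_form_add_right: "bilinear_form s B \<Longrightarrow> B z (x + y) = B z x + B z y"
  by (simp add: bilinear_form_def Vector_Spaces.linear_iff)

lemma bilinear_form_diff_right: "bilinear_form s B \<Longrightarrow> B z (x - y) = B z x - B z y"
  by (rule linear_map_diff[OF bilinear_form_linear_right])

lemma nondegenerate_iff_inj:
  assumes "bilinear_form s B"
  shows "nondegenerate B \<longleftrightarrow> inj B"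
proof -
  have "B x = B y \<longleftrightarrow> (\<forall>z. B (x - y) z = 0)" for x y
    by (auto simp: fun_eq_iff bilinear_form_diff_left[OF assms])
  then show ?thesis
    unfolding nondegenerate_def inj_def by (metis diff_0_right eq_iff_diff_eq_0)
qed

context finite_dimensional_vector_space
begin

lemma linear_functional_eq_on_Basis:
  assumes "Vector_Spaces.linear scale (*) f" "Vector_Spaces.linear scale (*) g"
    and "\<And>e. e \<in> Basis \<Longrightarrow> f e = g e"
  shows "f = g"
proof -
  interpret vector_space_pair scale "(*)"
    by (intro vector_space_pair.intro vector_space_field_mult) unfold_locales
  show ?thesis
    using linear_eq_on[OF assms(1,2)] assms(3) span_Basis by blast
qed

lemma Basis_coefficients_unique:
  "(\<Sum>e\<in>Basis. a e *s e) = (\<Sum>e\<in>Basis. a' e *s e) \<Longrightarrow> e \<in> Basis \<Longrightarrow> a e = a' e"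
  using independentD[OF independent_Basis finite_Basis subset_refl, of "\<lambda>e. a e - a' e"]
  by (simp add: scale_left_diff_distrib sum_subtractf)

text \<open>The coordinate map M u = \<Sum>e. B u e *s e is injective by nondegeneracy, hence
  surjective; a preimage of the coordinate vector of f represents f.\<close>
lemma nondegenerate_form_onto_dual:
  assumes B: "bilinear_form scale B" "nondegenerate B"
    and f: "Vector_Spaces.linear scale (*) f"
  shows "f \<in> range B"
proof -
  define M where "M u = (\<Sum>e\<in>Basis. B u e *s e)" for u
  have "Vector_Spaces.linear scale scale M"
    by (simp add: Vector_Spaces.linear_iff M_def bilinear_form_add_left[OF B(1)]
        bilinear_form_scale_left[OF B(1)] scale_left_distrib sum.distrib scale_sum_right
        vector_space_axioms)
  moreover have "inj M"
  proof (rule injI)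
    fix u v assume "M u = M v"
    then have "B u = B v"
      by (intro linear_functional_eq_on_Basis bilinear_form_linear_right[OF B(1)])
        (use Basis_coefficients_unique[of "B u" "B v"] in \<open>simp add: M_def\<close>)
    then show "u = v"
      using B nondegenerate_iff_inj by (metis injD)
  qed
  ultimately obtain u where "M u = (\<Sum>e\<in>Basis. f e *s e)"
    using linear_inj_imp_surj by (metis surjD)
  then have "B u = f"
    by (intro linear_functional_eq_on_Basis bilinear_form_linear_right[OF B(1)] f)
      (use Basis_coefficients_unique[of "B u" f] in \<open>simp add: M_def\<close>)
  then show ?thesis by blast
qed

end

lemma nondegenerate_form_bij_dual_space:
  assumes "fin_dim_vs s" "bilinear_form s B" "nondegenerate B"
  shows "bij_betw B UNIV (dual_space s)"
proof -
  obtain Bas where "finite_dimensional_vector_space s Bas"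
    using assms(1) by (auto simp: fin_dim_vs_def)
  then have "dual_space s \<subseteq> range B"
    using finite_dimensional_vector_space.nondegenerate_form_onto_dual assms(2,3)
    by (fastforce simp: dual_space_def)
  moreover have "range B \<subseteq> dual_space s"
    using bilinear_form_linear_right[OF assms(2)] by (auto simp: dual_space_def)
  ultimately show ?thesis
    using assms(2,3) nondegenerate_iff_inj by (auto simp: bij_betw_def)
qed

abbreviation coadjoint_equivalent ::
  "('k::field \<Rightarrow> 'a::ab_group_add \<Rightarrow> 'a) \<Rightarrow> ('a \<Rightarrow> 'a \<Rightarrow> 'a) \<Rightarrow> ('a \<Rightarrow> 'a \<Rightarrow> 'a) \<Rightarrow> bool" where
  "coadjoint_equivalent s c b \<equiv>
     reps_equivalent s (Lop c) (Rop c) (Lop b) (Rop b)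
       (\<lambda>x a y. - dual_map (Lop c) x a y)
       (\<lambda>x a y. - dual_map (Lop c) x a y + dual_map (Rop c) x a y)
       (\<lambda>x a. dual_map (Lop b) x a)
       (\<lambda>x a y. - dual_map (Lop b) x a y - dual_map (Rop b) x a y)"

lemma invariant_form_iff_intertwines_right_actions:
  assumes "bilinear_form s B"
  shows "invariant_form c b B \<longleftrightarrow>
    (\<forall>x v. B (Rop c x v) = (\<lambda>y. - dual_map (Lop c) x (B v) y + dual_map (Rop c) x (B v) y)) \<and>
    (\<forall>x v. B (Rop b x v) = (\<lambda>y. - dual_map (Lop b) x (B v) y - dual_map (Rop b) x (B v) y))"
  by (simp add: invariant_form_def Lop_def Rop_def dual_map_def fun_eq_iff
      bilinear_form_add_right[OF assms] bilinear_form_diff_right[OF assms]) blast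

lemma skew_invariant_form_intertwines_left_actions:
  assumes B: "bilinear_form s B" "skew_symmetric B" "invariant_form c b B"
  shows "B (Lop c x v) = (\<lambda>y. - dual_map (Lop c) x (B v) y)"
    and "B (Lop b x v) = dual_map (Lop b) x (B v)"
proof -
  have skew: "B p q = - B q p" for p q
    using B(2) unfolding skew_symmetric_def by blast
  have "B (c x v) y = B v (c x y)" "B (b x v) y = - B v (b x y)" for y
    using B(3) skew[of v "c x y"] skew[of v "b x y"]
    by (simp_all add: invariant_form_def
        bilinear_form_add_right[OF B(1)] bilinear_form_diff_right[OF B(1)])
  then show "B (Lop c x v) = (\<lambda>y. - dual_map (Lop c) x (B v) y)"
    and "B (Lop b x v) = dual_map (Lop b) x (B v)"
    by (simp_all add: Lop_def dual_map_def fun_eq_iff)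
qed

lemma coadjoint_equivalent_if_skew_invariant_form:
  assumes "fin_dim_vs s" "bilinear_form s B" "nondegenerate B" "skew_symmetric B"
    and "invariant_form c b B"
  shows "coadjoint_equivalent s c b"
  unfolding reps_equivalent_def
proof (intro exI[of _ B] conjI allI)
  show "B (u + v) = (\<lambda>y. B u y + B v y)" "B (s a u) = (\<lambda>y. a * B u y)" for u v a
    by (simp_all add: fun_eq_iff bilinear_form_add_left[OF assms(2)]
        bilinear_form_scale_left[OF assms(2)])
  show "bij_betw B UNIV (dual_space s)"
    using assms(1-3) by (rule nondegenerate_form_bij_dual_space)
qed (use assms(2,4,5) invariant_form_iff_intertwines_right_actions
    skew_invariant_form_intertwines_left_actions in blast)+

lemma invariant_form_if_coadjoint_equivalent:
  fixes s :: "'k::field \<Rightarrow> 'a::ab_group_add \<Rightarrow> 'a"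
  assumes "vector_space s" "coadjoint_equivalent s c b"
  obtains B :: "'a \<Rightarrow> 'a \<Rightarrow> 'k" where
    "bilinear_form s B" "nondegenerate B" "invariant_form c b B"
proof -
  obtain \<phi> :: "'a \<Rightarrow> 'a \<Rightarrow> 'k" where
    add: "\<And>u v. \<phi> (u + v) = (\<lambda>y. \<phi> u y + \<phi> v y)" and
    scale: "\<And>a u. \<phi> (s a u) = (\<lambda>y. a * \<phi> u y)" and
    bij: "bij_betw \<phi> UNIV (dual_space s)" and
    right_actions:
      "\<forall>x v. \<phi> (Rop c x v) = (\<lambda>y. - dual_map (Lop c) x (\<phi> v) y + dual_map (Rop c) x (\<phi> v) y)"
      "\<forall>x v. \<phi> (Rop b x v) = (\<lambda>y. - dual_map (Lop b) x (\<phi> v) y - dual_map (Rop b) x (\<phi> v) y)"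
    using assms(2) unfolding reps_equivalent_def by blast
  have "Vector_Spaces.linear s (*) (\<phi> x)" for x
    using bij by (auto simp: bij_betw_def dual_space_def)
  moreover have "Vector_Spaces.linear s (*) (\<lambda>x. \<phi> x y)" for y
    using assms(1) vector_space_field_mult add scale by (simp add: Vector_Spaces.linear_iff)
  ultimately have bil: "bilinear_form s \<phi>"
    by (simp add: bilinear_form_def)
  show ?thesis
  proof
    show "nondegenerate \<phi>"
      using bij nondegenerate_iff_inj[OF bil] by (simp add: bij_betw_def)
    show "invariant_form c b \<phi>"
      using right_actions invariant_form_iff_intertwines_right_actions[OF bil] by blast
  qed (fact bil)
qed

theorem proposition2p40:
  fixes s :: "'k::field_char_0 \<Rightarrow> 'a::ab_group_add \<Rightarrow> 'a"
    and c b :: "'a \<Rightarrow> 'a \<Rightarrow> 'a"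
  assumes vs: "vector_space s"
    and fd: "fin_dim_vs s"
    and bil_c: "bilinear_op s c"
    and bil_b: "bilinear_op s b"
    and dpp: "dual_pre_poisson c b"
  shows "((\<exists>B :: 'a \<Rightarrow> 'a \<Rightarrow> 'k. bilinear_form s B \<and> nondegenerate B \<and> skew_symmetric B
              \<and> invariant_form c b B) \<longrightarrow>
          reps_equivalent s (Lop c) (Rop c) (Lop b) (Rop b)
            (\<lambda>x a y. - dual_map (Lop c) x a y)
            (\<lambda>x a y. - dual_map (Lop c) x a y + dual_map (Rop c) x a y)
            (\<lambda>x a. dual_map (Lop b) x a)
            (\<lambda>x a y. - dual_map (Lop b) x a y - dual_map (Rop b) x a y))
       \<and> (reps_equivalent s (Lop c) (Rop c) (Lop b) (Rop b)
            (\<lambda>x a y. - dual_map (Lop c) x a y)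
            (\<lambda>x a y. - dual_map (Lop c) x a y + dual_map (Rop c) x a y)
            (\<lambda>x a. dual_map (Lop b) x a)
            (\<lambda>x a y. - dual_map (Lop b) x a y - dual_map (Rop b) x a y) \<longrightarrow>
          (\<exists>B :: 'a \<Rightarrow> 'a \<Rightarrow> 'k. bilinear_form s B \<and> nondegenerate B \<and> invariant_form c b B))"
  using coadjoint_equivalent_if_skew_invariant_form[OF fd]
    invariant_form_if_coadjoint_equivalent[OF vs] by blast

end
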